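(* For every composition $I=(i_1,\dots,i_j)$ (positive integers, $j\ge1$): (a) $\eta_{1,1}(M_I)=\zeta(i_j+1,i_{j-1},\dots,i_1)$; (b) $\eta_{0,1,1}(M_I)=1$ if $I=(1)$; $\eta_{0,1,1}(M_I)=\eta_{0,1,1}(M_{(i_1,\dots,i_{j-1})})$ if $i_j=1$ and $j\ge2$; and $\eta_{0,1,1}(M_I)=\zeta(i_j,i_{j-1},\dots,i_1)-\eta_{0,1,1}(M_{(i_1,\dots,i_{j-1},i_j-1)})$ if $i_j\ge2$.
   Context: For a composition $I=(i_1,\dots,i_j)$ and $n\ge1$, let $M_I(n)=\sum_{1\le n_1<n_2<\cdots<n_j\le n}n_1^{-i_1}\cdots n_j^{-i_j}$ (this is the monomial quasi-symmetric function $M_I$ evaluated at $x_r=1/r$ for $r\le n$ and $x_r=0$ for $r>n$). For nonnegative integers $s_1,\dots,s_k$ with $s_1+\dots+s_k\ge2$, $\eta_{s_1,\dots,s_k}(M_I)=\sum_{n=1}^\infty\frac{M_I(n)}{n^{s_1}(n+1)^{s_2}\cdots(n+k-1)^{s_k}}$, extended linearly to quasi-symmetric functions. Multiple zeta values: for positive integers $a_1,\dots,a_k$ with $a_1\ge2$, $\zeta(a_1,\dots,a_k)=\sum_{n_1>\cdots>n_k\ge1}n_1^{-a_1}\cdots n_k^{-a_k}$. *)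

theory Defs
  imports "HOL-Analysis.Analysis"
begin

definition is_composition :: "nat list \<Rightarrow> bool" where
  "is_composition I \<longleftrightarrow> I \<noteq> [] \<and> (\<forall>i\<in>set I. i > 0)"

definition Mqs :: "nat list \<Rightarrow> nat \<Rightarrow> real" where
  "Mqs I n = (\<Sum>ns\<in>{ns. length ns = length I \<and> sorted_wrt (<) ns \<and> set ns \<subseteq> {1..n}}.
              \<Prod>k<length I. 1 / real (ns ! k) ^ (I ! k))"

definition eta :: "nat list \<Rightarrow> nat list \<Rightarrow> real" where
  "eta s I = (\<Sum>n. Mqs I (Suc n) / (\<Prod>k<length s. real (Suc n + k) ^ (s ! k)))"

definition mzeta :: "nat list \<Rightarrow> real" where
  "mzeta a = infsum (\<lambda>ns. \<Prod>k<length a. 1 / real (ns ! k) ^ (a ! k))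
              {ns. length ns = length a \<and> sorted_wrt (>) ns \<and> 0 \<notin> set ns}"

end

theory Submission
  imports Defs "HOL-Real_Asymp.Real_Asymp"
begin

text \<open>Write \<open>I = J @ [a]\<close>. Then \<open>M\<^sub>I(n+1) - M\<^sub>I(n) = M\<^sub>J(n) / (n+1)\<^sup>a\<close>, so summation by parts of
  \<open>\<Sum> M\<^sub>I(n+1) (1/(n+1+c) - 1/(n+2+c))\<close> gives \<open>\<eta> = \<Sum> M\<^sub>J(n) / ((n+1)\<^sup>a (n+1+c))\<close>; the boundary
  term vanishes because \<open>M\<^sub>J(n) = O(\<surd>n)\<close>. For \<open>c = 0\<close> this is \<open>\<Sum> M\<^sub>J(n) / (n+1)\<^sup>a\<^sup>+\<^sup>1\<close>, which is the
  multiple zeta value after grouping its index tuples by their largest entry \<open>n+1\<close>. For \<open>c = 1\<close>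
  the partial fraction \<open>1/((n+1)\<^sup>a (n+2)) = 1/(n+1)\<^sup>a - 1/((n+1)\<^sup>a\<^sup>-\<^sup>1 (n+2))\<close> gives the recursion,
  and for \<open>a = 1\<close> the sum is \<open>\<eta>\<^sub>0\<^sub>,\<^sub>1\<^sub>,\<^sub>1(M\<^sub>J)\<close> shifted by one index, since \<open>M\<^sub>J(0) = 0\<close>.\<close>

definition tuple_weight :: "nat list \<Rightarrow> nat list \<Rightarrow> real" where
  "tuple_weight ns I = prod_list (map2 (\<lambda>n i. 1 / real n ^ i) ns I)"

definition increasing_tuples :: "nat \<Rightarrow> nat \<Rightarrow> nat list set" where
  "increasing_tuples L n = {ns. length ns = L \<and> sorted_wrt (<) ns \<and> set ns \<subseteq> {1..n}}"

lemma prod_nth_eq_tuple_weight: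
  assumes "length ns = length I"
  shows "(\<Prod>k<length I. 1 / real (ns ! k) ^ (I ! k)) = tuple_weight ns I"
  unfolding tuple_weight_def prod.list_conv_set_nth
  using assms by (intro prod.cong) auto

lemma tuple_weight_nonneg: "tuple_weight ns I \<ge> 0"
  unfolding tuple_weight_def by (rule prod_list_nonneg) (auto elim!: in_set_zipE)

lemma tuple_weight_snoc:
  "length ks = length J \<Longrightarrow> tuple_weight (ks @ [m]) (J @ [a]) = tuple_weight ks J / real m ^ a"
  unfolding tuple_weight_def by simp

lemma tuple_weight_rev:
  "length ks = length J \<Longrightarrow> tuple_weight (rev ks) (rev J) = tuple_weight ks J"
  unfolding tuple_weight_def by (simp add: zip_rev rev_map[symmetric])

lemma finite_increasing_tuples: "finite (increasing_tuples L n)"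
proof -
  have "increasing_tuples L n \<subseteq> {xs. set xs \<subseteq> {1..n} \<and> length xs = L}"
    unfolding increasing_tuples_def by auto
  then show ?thesis using finite_lists_length_eq[of "{1..n}" L] finite_subset by blast
qed

lemma increasing_tuples_0: "increasing_tuples 0 n = {[]}"
  unfolding increasing_tuples_def by auto

lemma increasing_tuples_Suc_0: "increasing_tuples (Suc L) 0 = {}"
  unfolding increasing_tuples_def by (auto simp: length_Suc_conv)

lemma increasing_tuples_Suc:
  "increasing_tuples (Suc L) (Suc n) =
     increasing_tuples (Suc L) n \<union> (\<lambda>ks. ks @ [Suc n]) ` increasing_tuples L n"
proof
  show "increasing_tuples (Suc L) (Suc n) \<subseteq>
          increasing_tuples (Suc L) n \<union> (\<lambda>ks. ks @ [Suc n]) ` increasing_tuples L n"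
  proof
    fix ns assume ns: "ns \<in> increasing_tuples (Suc L) (Suc n)"
    then have "ns \<noteq> []" unfolding increasing_tuples_def by auto
    then obtain ks x where ns_eq: "ns = ks @ [x]" by (metis rev_exhaust)
    with ns have ks: "length ks = L" "sorted_wrt (<) ks" "\<forall>y\<in>set ks. y < x" "set ks \<subseteq> {1..Suc n}"
      and x: "x \<in> {1..Suc n}"
      unfolding increasing_tuples_def by (auto simp: sorted_wrt_append)
    show "ns \<in> increasing_tuples (Suc L) n \<union> (\<lambda>ks. ks @ [Suc n]) ` increasing_tuples L n"
    proof (cases "x = Suc n")
      case True
      then have "ks \<in> increasing_tuples L n" using ks unfolding increasing_tuples_def by force
      then show ?thesis using ns_eq True by auto
    next
      case False
      then have "ns \<in> increasing_tuples (Suc L) n"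
        using ns ns_eq ks x unfolding increasing_tuples_def by force
      then show ?thesis by auto
    qed
  qed
qed (force simp: increasing_tuples_def sorted_wrt_append)

lemma Mqs_eq_sum_tuple_weight: "Mqs I n = (\<Sum>ns\<in>increasing_tuples (length I) n. tuple_weight ns I)"
  unfolding Mqs_def increasing_tuples_def by (intro sum.cong refl prod_nth_eq_tuple_weight) auto

lemma Mqs_nonneg: "Mqs I n \<ge> 0"
  unfolding Mqs_eq_sum_tuple_weight by (intro sum_nonneg tuple_weight_nonneg)

lemma Mqs_Nil: "Mqs [] n = 1"
  unfolding Mqs_eq_sum_tuple_weight by (simp add: increasing_tuples_0 tuple_weight_def)

lemma Mqs_snoc_0: "Mqs (J @ [a]) 0 = 0"
  unfolding Mqs_eq_sum_tuple_weight by (simp add: increasing_tuples_Suc_0)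

lemma Mqs_snoc_Suc: "Mqs (J @ [a]) (Suc n) = Mqs (J @ [a]) n + Mqs J n / real (Suc n) ^ a"
proof -
  let ?T = "increasing_tuples" and ?L = "length J" and ?app = "\<lambda>ks. ks @ [Suc n]"
  have "Mqs (J @ [a]) (Suc n) =
      (\<Sum>ns\<in>?T (Suc ?L) n. tuple_weight ns (J @ [a])) + (\<Sum>ns\<in>?app ` ?T ?L n. tuple_weight ns (J @ [a]))"
    unfolding Mqs_eq_sum_tuple_weight length_append_singleton increasing_tuples_Suc
    by (rule sum.union_disjoint[OF finite_increasing_tuples finite_imageI[OF finite_increasing_tuples]])
       (auto simp: increasing_tuples_def)
  also have "(\<Sum>ns\<in>?app ` ?T ?L n. tuple_weight ns (J @ [a])) = (\<Sum>ks\<in>?T ?L n. tuple_weight ks J / real (Suc n) ^ a)"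
    by (subst sum.reindex) (auto intro!: inj_onI sum.cong simp: increasing_tuples_def tuple_weight_snoc
        simp del: of_nat_Suc)
  finally show ?thesis
    unfolding Mqs_eq_sum_tuple_weight by (simp add: sum_divide_distrib)
qed

lemma sum_inverse_sqrt_le: "(\<Sum>m\<in>{1..n}. 1 / sqrt (real m)) \<le> 2 * sqrt (real n)"
proof (induction n)
  case (Suc n)
  have "sqrt (real n) * sqrt (real n + 1) = sqrt (real n * (real n + 1))"
    by (simp add: real_sqrt_mult)
  also have "\<dots> \<le> sqrt ((real n + 1/2)\<^sup>2)"
    by (intro real_sqrt_le_mono) (simp add: power2_eq_square algebra_simps)
  finally have "1 \<le> (2 * sqrt (real n + 1) - 2 * sqrt (real n)) * sqrt (real n + 1)"
    by (simp add: algebra_simps)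
  then have "1 / sqrt (real n + 1) \<le> 2 * sqrt (real n + 1) - 2 * sqrt (real n)"
    by (simp add: divide_simps mult.commute)
  then show ?case using Suc.IH by (simp add: add.commute)
qed simp

lemma Mqs_le_sqrt:
  assumes "\<forall>i\<in>set J. i > 0"
  shows "Mqs J n \<le> 2 ^ length J * sqrt (real n + 1)"
  using assms
proof (induction J arbitrary: n rule: rev_induct)
  case (snoc a J)
  define K :: real where "K = 2 ^ length J"
  have "a \<ge> 1" using snoc.prems by auto
  have IH: "Mqs J n \<le> K * sqrt (real n + 1)" for n using snoc by (simp add: K_def)
  have "Mqs (J @ [a]) n \<le> K * (\<Sum>m\<in>{1..n}. 1 / sqrt (real m))" for n
  proof (induction n)
    case (Suc n)
    have "real (Suc n) ^ 1 \<le> real (Suc n) ^ a"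
      using \<open>a \<ge> 1\<close> by (intro power_increasing) auto
    then have "Mqs J n / real (Suc n) ^ a \<le> Mqs J n / real (Suc n)"
      by (intro divide_left_mono) (auto simp: Mqs_nonneg)
    also have "\<dots> \<le> K * sqrt (real n + 1) / (real n + 1)"
      using IH[of n] by (simp add: divide_right_mono add.commute)
    also have "\<dots> = K * (1 / sqrt (real (Suc n)))"
      by (simp add: field_simps add.commute)
    finally show ?case
      using Suc.IH by (simp add: Mqs_snoc_Suc distrib_left)
  qed (simp add: Mqs_snoc_0)
  also have "K * (\<Sum>m\<in>{1..n}. 1 / sqrt (real m)) \<le> K * (2 * sqrt (real n + 1))"
    using sum_inverse_sqrt_le[of n] by (intro mult_left_mono) (auto simp: K_def intro: order_trans)
  finally show ?case by (simp add: K_def algebra_simps)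
qed (simp add: Mqs_Nil)

lemma summable_Mqs_divide:
  assumes "\<forall>i\<in>set J. i > 0" and "\<And>n. (real n + 1)\<^sup>2 \<le> d n"
  shows "summable (\<lambda>n. Mqs J n / d n)"
proof (rule summable_comparison_test_ev)
  have "summable (\<lambda>n. real (Suc n) powr (-3/2))"
    using summable_real_powr_iff[of "-3/2"] summable_Suc_iff[of "\<lambda>n. real n powr (-3/2)"] by simp
  then show "summable (\<lambda>n. 2 ^ length J * real (Suc n) powr (-3/2))"
    by (rule summable_mult)
  show "\<forall>\<^sub>F n in sequentially. norm (Mqs J n / d n) \<le> 2 ^ length J * real (Suc n) powr (-3/2)"
  proof (intro always_eventually allI)
    fix n
    have pos: "(real n + 1)\<^sup>2 > 0" by simp
    then have "d n > 0" using assms(2)[of n] by linarith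
    have "norm (Mqs J n / d n) = Mqs J n / d n"
      using \<open>d n > 0\<close> by (simp add: Mqs_nonneg)
    also have "\<dots> \<le> Mqs J n / (real n + 1)\<^sup>2"
      using \<open>d n > 0\<close> assms(2)[of n] pos by (intro divide_left_mono Mqs_nonneg mult_pos_pos)
    also have "\<dots> \<le> 2 ^ length J * sqrt (real n + 1) / (real n + 1)\<^sup>2"
      using Mqs_le_sqrt[OF assms(1)] by (intro divide_right_mono) auto
    also have "\<dots> = 2 ^ length J * real (Suc n) powr (-3/2)"
    proof -
      have "sqrt (real n + 1) / (real n + 1)\<^sup>2 = (real n + 1) powr (1/2) / (real n + 1) powr 2"
        by (simp add: powr_half_sqrt)
      also have "\<dots> = real (Suc n) powr (-3/2)"
        using powr_diff[of "real n + 1" "1/2" 2] by (simp add: add.commute)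
      finally show ?thesis by (metis times_divide_eq_right)
    qed
    finally show "norm (Mqs J n / d n) \<le> 2 ^ length J * real (Suc n) powr (-3/2)"
      by simp
  qed
qed

lemma square_le_power_mult:
  assumes "a \<ge> 1" and "c \<ge> 0"
  shows "(real n + 1)\<^sup>2 \<le> real (Suc n) ^ a * (real n + 1 + c)"
proof -
  have "real n + 1 \<le> real (Suc n) ^ a"
    using power_increasing[OF \<open>a \<ge> 1\<close>, of "real (Suc n)"] by simp
  then show ?thesis
    unfolding power2_eq_square using \<open>c \<ge> 0\<close> by (intro mult_mono) auto
qed

lemma Mqs_divide_tendsto_0:
  assumes "\<forall>i\<in>set J. i > 0" and "c \<ge> 0"
  shows "(\<lambda>N. Mqs J N / (real N + 1 + c)) \<longlonglongrightarrow> 0"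
proof (rule tendsto_sandwich[where f = "\<lambda>_. 0"])
  show "\<forall>\<^sub>F N in sequentially. 0 \<le> Mqs J N / (real N + 1 + c)"
    using assms by (auto simp: Mqs_nonneg)
  show "\<forall>\<^sub>F N in sequentially. Mqs J N / (real N + 1 + c) \<le> 2 ^ length J * (sqrt (real N + 1) / (real N + 1))"
  proof (intro always_eventually allI)
    fix N
    have "Mqs J N / (real N + 1 + c) \<le> Mqs J N / (real N + 1)"
      using assms by (intro divide_left_mono) (auto simp: Mqs_nonneg)
    also have "\<dots> \<le> 2 ^ length J * sqrt (real N + 1) / (real N + 1)"
      using Mqs_le_sqrt[OF assms(1)] by (intro divide_right_mono) auto
    finally show "Mqs J N / (real N + 1 + c) \<le> 2 ^ length J * (sqrt (real N + 1) / (real N + 1))"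
      by simp
  qed
  have "(\<lambda>N::nat. sqrt (real N + 1) / (real N + 1)) \<longlonglongrightarrow> 0" by real_asymp
  then show "(\<lambda>N. 2 ^ length J * (sqrt (real N + 1) / (real N + 1))) \<longlonglongrightarrow> 0"
    by (rule tendsto_mult_right_zero)
qed simp

lemma sum_by_parts_lessThan:
  fixes g h :: "nat \<Rightarrow> 'a :: comm_ring"
  assumes "g 0 = 0"
  shows "(\<Sum>n<N. g (Suc n) * (h n - h (Suc n))) = (\<Sum>n<N. (g (Suc n) - g n) * h n) - g N * h N"
  by (induction N) (simp_all add: assms algebra_simps)

lemma sums_by_parts:
  fixes g h :: "nat \<Rightarrow> 'a :: real_normed_field"
  assumes "g 0 = 0" and "summable (\<lambda>n. (g (Suc n) - g n) * h n)" and "(\<lambda>N. g N * h N) \<longlonglongrightarrow> 0"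
  shows "(\<lambda>n. g (Suc n) * (h n - h (Suc n))) sums (\<Sum>n. (g (Suc n) - g n) * h n)"
  unfolding sums_def sum_by_parts_lessThan[of g, OF assms(1)]
  using tendsto_diff[OF summable_LIMSEQ[OF assms(2)] assms(3)] by simp

lemma increasing_tuples_bij_betw_mzeta_tuples:
  "bij_betw (\<lambda>(n, ks). Suc n # rev ks) (SIGMA n:UNIV. increasing_tuples L n)
     {ns. length ns = Suc L \<and> sorted_wrt (>) ns \<and> 0 \<notin> set ns}"
proof (rule bij_betw_byWitness[where f' = "\<lambda>ns. (hd ns - 1, rev (tl ns))"])
  show "(\<lambda>(n, ks). Suc n # rev ks) ` (SIGMA n:UNIV. increasing_tuples L n)
          \<subseteq> {ns. length ns = Suc L \<and> sorted_wrt (>) ns \<and> 0 \<notin> set ns}"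
    by (fastforce simp: increasing_tuples_def sorted_wrt_rev less_Suc_eq_le)
  show "(\<lambda>ns. (hd ns - 1, rev (tl ns))) ` {ns. length ns = Suc L \<and> sorted_wrt (>) ns \<and> 0 \<notin> set ns}
          \<subseteq> (SIGMA n:UNIV. increasing_tuples L n)"
  proof (intro image_subsetI)
    fix ns :: "nat list" assume "ns \<in> {ns. length ns = Suc L \<and> sorted_wrt (>) ns \<and> 0 \<notin> set ns}"
    then obtain m ms where ns: "ns = m # ms" "length ms = L" "\<forall>x\<in>set ms. x < m" "sorted_wrt (>) ms"
      "0 \<notin> set ms"
      by (auto simp: length_Suc_conv)
    have "set ms \<subseteq> {1..m - 1}"
    proof
      fix x assume "x \<in> set ms"
      then have "0 < x" "x < m" using ns by (auto intro: gr0I)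
      then show "x \<in> {1..m - 1}" by simp
    qed
    then show "(hd ns - 1, rev (tl ns)) \<in> (SIGMA n:UNIV. increasing_tuples L n)"
      using ns by (simp add: increasing_tuples_def sorted_wrt_rev)
  qed
qed (auto simp: length_Suc_conv)

lemma Mqs_over_power_sums_mzeta:
  assumes J: "\<forall>i\<in>set J. i > 0" and "b \<ge> 2"
  shows "(\<lambda>n. Mqs J n / real (Suc n) ^ b) sums mzeta (b # rev J)"
proof -
  define L where "L = length J"
  define c where "c n = Mqs J n / real (Suc n) ^ b" for n
  define F where "F p = tuple_weight (snd p) J / real (Suc (fst p)) ^ b" for p :: "nat \<times> nat list"
  define A :: "nat list set" where "A = {ns. length ns = Suc L \<and> sorted_wrt (>) ns \<and> 0 \<notin> set ns}"
  define f where "f ns = (\<Prod>k<length (b # rev J). 1 / real (ns ! k) ^ ((b # rev J) ! k))" for ns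
  have "(real n + 1)\<^sup>2 \<le> real (Suc n) ^ b" for n
    using power_increasing[OF \<open>b \<ge> 2\<close>, of "real (Suc n)"] by (simp add: add.commute)
  then have "summable c"
    unfolding c_def by (intro summable_Mqs_divide[OF J])
  then have "(c has_sum suminf c) UNIV"
    by (intro sums_nonneg_imp_has_sum summable_sums) (auto simp: c_def intro!: divide_nonneg_nonneg Mqs_nonneg)
  moreover have fibre: "((\<lambda>ks. F (n, ks)) has_sum c n) (increasing_tuples L n)" for n
    by (rule has_sum_finiteI[OF finite_increasing_tuples])
       (simp add: c_def F_def Mqs_eq_sum_tuple_weight L_def sum_divide_distrib)
  ultimately have F_has_sum: "(F has_sum suminf c) (SIGMA n:UNIV. increasing_tuples L n)"
    by (intro has_sum_SigmaI[OF fibre] summable_on_SigmaI[OF fibre])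
       (auto simp: F_def tuple_weight_nonneg intro: has_sum_imp_summable)
  have f_shift: "f (Suc n # rev ks) = F (n, ks)" if "ks \<in> increasing_tuples L n" for n ks
  proof -
    have len: "length ks = length J" using that by (simp add: increasing_tuples_def L_def)
    then have "f (Suc n # rev ks) = tuple_weight (Suc n # rev ks) (b # rev J)"
      unfolding f_def by (intro prod_nth_eq_tuple_weight) simp
    also have "\<dots> = tuple_weight (rev ks) (rev J) / real (Suc n) ^ b"
      by (simp add: tuple_weight_def)
    also have "\<dots> = F (n, ks)" by (simp add: F_def tuple_weight_rev[OF len])
    finally show ?thesis .
  qed
  have "((\<lambda>p. f (case p of (n, ks) \<Rightarrow> Suc n # rev ks)) has_sum suminf c)
          (SIGMA n:UNIV. increasing_tuples L n)"
    by (rule has_sum_cong[THEN iffD1, OF _ F_has_sum]) (auto simp: f_shift)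
  then have "(f has_sum suminf c) A"
    unfolding A_def by (simp add: has_sum_reindex_bij_betw[OF increasing_tuples_bij_betw_mzeta_tuples])
  then have "mzeta (b # rev J) = suminf c"
    unfolding mzeta_def A_def f_def L_def by (simp add: infsumI)
  with \<open>summable c\<close> show ?thesis unfolding c_def by (simp add: summable_sums)
qed

lemma eta_snoc_sums:
  assumes J: "\<forall>i\<in>set J. i > 0" and "a \<ge> 1" and "c \<ge> 0"
  shows "(\<lambda>n. Mqs (J @ [a]) (Suc n) / ((real n + 1 + c) * (real n + 2 + c))) sums
           (\<Sum>n. Mqs J n / (real (Suc n) ^ a * (real n + 1 + c)))"
proof -
  let ?g = "Mqs (J @ [a])" and ?h = "\<lambda>n. 1 / (real n + 1 + c)"
  have increment: "(?g (Suc n) - ?g n) * ?h n = Mqs J n / (real (Suc n) ^ a * (real n + 1 + c))" for n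
    by (simp only: Mqs_snoc_Suc) simp
  have "summable (\<lambda>n. (?g (Suc n) - ?g n) * ?h n)"
    unfolding increment using square_le_power_mult[OF \<open>a \<ge> 1\<close> \<open>c \<ge> 0\<close>]
    by (rule summable_Mqs_divide[OF J])
  moreover have "(\<lambda>N. ?g N * ?h N) \<longlonglongrightarrow> 0"
    using Mqs_divide_tendsto_0[of "J @ [a]" c] J \<open>a \<ge> 1\<close> \<open>c \<ge> 0\<close> by simp
  ultimately have "(\<lambda>n. ?g (Suc n) * (?h n - ?h (Suc n))) sums (\<Sum>n. (?g (Suc n) - ?g n) * ?h n)"
    by (intro sums_by_parts Mqs_snoc_0)
  moreover have "?g (Suc n) * (?h n - ?h (Suc n)) = ?g (Suc n) / ((real n + 1 + c) * (real n + 2 + c))" for n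
    using \<open>c \<ge> 0\<close> by (simp add: field_simps)
  ultimately show ?thesis by (simp only: increment)
qed

lemma eta_1_1_snoc:
  assumes "\<forall>i\<in>set J. i > 0" and "a \<ge> 1"
  shows "eta [1, 1] (J @ [a]) = mzeta ((a + 1) # rev J)"
proof -
  have "eta [1, 1] (J @ [a]) = (\<Sum>n. Mqs J n / (real (Suc n) ^ a * (real n + 1 + 0)))"
    using sums_unique[OF eta_snoc_sums[OF assms, of 0]]
    by (simp add: eta_def numeral_2_eq_2 algebra_simps)
  also have "\<dots> = mzeta ((a + 1) # rev J)"
    using sums_unique[OF Mqs_over_power_sums_mzeta[OF assms(1), of "a + 1"]] \<open>a \<ge> 1\<close>
    by (simp add: algebra_simps)
  finally show ?thesis .
qed

lemma eta_0_1_1_snoc: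
  assumes "\<forall>i\<in>set J. i > 0" and "a \<ge> 1"
  shows "eta [0, 1, 1] (J @ [a]) = (\<Sum>n. Mqs J n / (real (Suc n) ^ a * (real n + 2)))"
  using sums_unique[OF eta_snoc_sums[OF assms, of 1]]
  by (simp add: eta_def numeral_3_eq_3 algebra_simps)

lemma eta_0_1_1_one: "eta [0, 1, 1] [1] = 1"
proof -
  have "(\<lambda>n. 1 / (real n + 1) - 1 / (real (Suc n) + 1)) sums (1 / (real 0 + 1) - 0)"
    by (rule telescope_sums'[of "\<lambda>n. 1 / (real n + 1)"]) real_asymp
  moreover have "1 / (real n + 1) - 1 / (real (Suc n) + 1) = Mqs [] n / (real (Suc n) ^ 1 * (real n + 2))" for n
    by (simp add: Mqs_Nil field_simps)
  ultimately show ?thesis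
    using eta_0_1_1_snoc[of "[]" 1] by (simp add: sums_iff)
qed

lemma eta_0_1_1_snoc_one:
  assumes "\<forall>i\<in>set J. i > 0" and "J \<noteq> []"
  shows "eta [0, 1, 1] (J @ [1]) = eta [0, 1, 1] J"
proof -
  obtain J' x where J: "J = J' @ [x]" using \<open>J \<noteq> []\<close> by (metis rev_exhaust)
  define u where "u n = Mqs J n / (real (Suc n) ^ 1 * (real n + 2))" for n
  have "summable u"
    unfolding u_def using square_le_power_mult[of 1 1]
    by (intro summable_Mqs_divide[OF assms(1)]) (simp add: add.commute)
  have "u 0 = 0" by (simp add: u_def J Mqs_snoc_0)
  have "eta [0, 1, 1] (J @ [1]) = suminf u"
    unfolding u_def using eta_0_1_1_snoc[OF assms(1), of 1] by simp
  also have "\<dots> = (\<Sum>n. u (Suc n))"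
    using \<open>summable u\<close> \<open>u 0 = 0\<close> by (simp add: suminf_split_head)
  also have "\<dots> = eta [0, 1, 1] J"
    unfolding eta_def u_def by (intro arg_cong[where f = suminf] ext) (simp add: numeral_3_eq_3 algebra_simps)
  finally show ?thesis .
qed

lemma partial_fraction_mult_succ:
  fixes M x p :: real
  assumes "x > 0" and "p > 0"
  shows "M / (x * p * (x + 1)) = M / (x * p) - M / (p * (x + 1))"
  using assms by (simp add: divide_simps) (simp add: algebra_simps)

lemma eta_0_1_1_snoc_Suc:
  assumes J: "\<forall>i\<in>set J. i > 0" and "a \<ge> 1"
  shows "eta [0, 1, 1] (J @ [Suc a]) = mzeta (Suc a # rev J) - eta [0, 1, 1] (J @ [a])"
proof -
  have zeta: "(\<lambda>n. Mqs J n / real (Suc n) ^ Suc a) sums mzeta (Suc a # rev J)"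
    using Mqs_over_power_sums_mzeta[OF J, of "Suc a"] \<open>a \<ge> 1\<close> by simp
  have summable: "summable (\<lambda>n. Mqs J n / (real (Suc n) ^ a * (real n + 2)))"
    using square_le_power_mult[OF \<open>a \<ge> 1\<close>, of 1]
    by (intro summable_Mqs_divide[OF J]) (simp add: add.commute)
  have partial_fraction: "Mqs J n / (real (Suc n) ^ Suc a * (real n + 2)) =
      Mqs J n / real (Suc n) ^ Suc a - Mqs J n / (real (Suc n) ^ a * (real n + 2))" for n
  proof -
    have "real n + 2 = real (Suc n) + 1" by simp
    then show ?thesis
      unfolding power_Suc by (simp only:) (rule partial_fraction_mult_succ, simp_all)
  qed
  have "eta [0, 1, 1] (J @ [Suc a]) = (\<Sum>n. Mqs J n / (real (Suc n) ^ Suc a * (real n + 2)))"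
    using eta_0_1_1_snoc[OF J, of "Suc a"] by simp
  also have "\<dots> = (\<Sum>n. Mqs J n / real (Suc n) ^ Suc a) - (\<Sum>n. Mqs J n / (real (Suc n) ^ a * (real n + 2)))"
    unfolding partial_fraction by (rule suminf_diff[OF sums_summable[OF zeta] summable, symmetric])
  also have "\<dots> = mzeta (Suc a # rev J) - eta [0, 1, 1] (J @ [a])"
    using sums_unique[OF zeta] eta_0_1_1_snoc[OF J \<open>a \<ge> 1\<close>] by simp
  finally show ?thesis .
qed

theorem mainTheorem9:
  fixes I :: "nat list"
  assumes "is_composition I"
  shows "eta [1, 1] I = mzeta ((last I + 1) # tl (rev I))
     \<and> (I = [1] \<longrightarrow> eta [0, 1, 1] I = 1)
     \<and> (last I = 1 \<and> length I \<ge> 2 \<longrightarrow> eta [0, 1, 1] I = eta [0, 1, 1] (butlast I))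
     \<and> (last I \<ge> 2 \<longrightarrow>
          eta [0, 1, 1] I = mzeta (rev I) - eta [0, 1, 1] (butlast I @ [last I - 1]))"
proof -
  obtain J a where I: "I = J @ [a]"
    using assms unfolding is_composition_def by (metis rev_exhaust)
  with assms have J: "\<forall>i\<in>set J. i > 0" and "a \<ge> 1"
    unfolding is_composition_def by auto
  have "eta [0, 1, 1] I = mzeta (rev I) - eta [0, 1, 1] (butlast I @ [last I - 1])" if "a \<ge> 2"
  proof -
    obtain b where "a = Suc b" "b \<ge> 1" using \<open>a \<ge> 2\<close> by (cases a) auto
    then show ?thesis using eta_0_1_1_snoc_Suc[OF J] by (simp add: I)
  qed
  moreover have "eta [0, 1, 1] I = eta [0, 1, 1] (butlast I)" if "a = 1" "J \<noteq> []"
    using eta_0_1_1_snoc_one[OF J] that by (simp add: I)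
  ultimately show ?thesis
    using eta_1_1_snoc[OF J \<open>a \<ge> 1\<close>] eta_0_1_1_one by (auto simp: I Suc_le_eq)
qed

end
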